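(* Let $I,S\ge 0$ be integers and consider the pairing process described in the context. If $j>\lfloor I/2\rfloor$ or $j<L(I,S)$, then no possible wiring has exactly $j$ bb-pairings. If $L(I,S)\le j\le\lfloor I/2\rfloor$, then every possible wiring with exactly $j$ bb-pairings occurs with probability $$\prod_{k=0}^{I-j-1-z}\frac{1}{I+S-1-2k},$$ where $z=1$ if $(I,S,j)$ is in the dagger case and $z=0$ otherwise.
   Context: Pairing process: there are $I$ infected devices $b_1,\dots,b_I$ and $S$ clean devices $w_1,\dots,w_S$. For $t=1,\dots,I$ in this order: if $b_t$ is not yet paired and at least one device other than $b_t$ is not yet paired, then $b_t$ chooses one of the currently unpaired devices other than itself uniformly at random, independently of previous choices, and becomes paired with it; otherwise $b_t$ does nothing. Each device belongs to at most one pair. The wiring is the final set of pairs; a bb-pairing is a pair consisting of two infected devices; a wiring is possible if it occurs with positive probability. $L(I,S)=0$ if $I\le S$; $L(I,S)=\frac{I-S}{2}$ if $I>S$ and $I-S$ is even; $L(I,S)=\frac{I-S-1}{2}$ if $I>S$ and $I-S$ is odd. $(I,S,j)$ is in the dagger case if $I>S$, $I+S$ is odd and $j=\frac{I-S-1}{2}$. *)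

theory Defs
  imports "HOL-Probability.Probability"
begin

text \<open>Devices are the natural numbers 0,...,I+S-1. Infected device b_(t+1) is the
number t (t < I); clean devices are I,...,I+S-1. A wiring is a set of pairs,
each pair being a two-element set of devices.\<close>

definition unpaired :: "nat \<Rightarrow> nat \<Rightarrow> nat set set \<Rightarrow> nat \<Rightarrow> nat set" where
  "unpaired I S W t = {u. u < I + S \<and> u \<noteq> t \<and> u \<notin> \<Union>W}"

definition step :: "nat \<Rightarrow> nat \<Rightarrow> nat \<Rightarrow> nat set set \<Rightarrow> nat set set pmf" where
  "step I S t W =
     (if t \<notin> \<Union>W \<and> unpaired I S W t \<noteq> {}
      then map_pmf (\<lambda>u. insert {t, u} W) (pmf_of_set (unpaired I S W t))
      else return_pmf W)"

definition wiring_pmf :: "nat \<Rightarrow> nat \<Rightarrow> nat set set pmf" where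
  "wiring_pmf I S = foldl (\<lambda>p t. bind_pmf p (step I S t)) (return_pmf {}) [0..<I]"

definition possible_wiring :: "nat \<Rightarrow> nat \<Rightarrow> nat set set \<Rightarrow> bool" where
  "possible_wiring I S W \<longleftrightarrow> pmf (wiring_pmf I S) W > 0"

definition bb_count :: "nat \<Rightarrow> nat set set \<Rightarrow> nat" where
  "bb_count I W = card {p \<in> W. p \<subseteq> {0..<I}}"

definition L :: "nat \<Rightarrow> nat \<Rightarrow> nat" where
  "L I S = (if I \<le> S then 0
            else if even (I - S) then (I - S) div 2 else (I - S - 1) div 2)"

definition dagger :: "nat \<Rightarrow> nat \<Rightarrow> nat \<Rightarrow> bool" where
  "dagger I S j \<longleftrightarrow> I > S \<and> odd (I + S) \<and> 2 * j + 1 = I - S"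

end

theory Submission
  imports Defs
begin

text \<open>After the first \<open>t\<close> infected devices have acted, a reachable wiring consists of
  disjoint pairs, each created by its smaller member, an infected device below \<open>t\<close>; and an
  earlier device that stayed unpaired found no free partner, so all other devices are paired.
  The pair created at step \<open>t\<close> is the one whose minimum is \<open>t\<close>, so removing it recovers the
  previous wiring: every reachable wiring has a single history. When a pair is added to a
  wiring with \<open>m\<close> pairs, exactly \<open>I + S - 1 - 2m\<close> devices were free, so a reachable wiring
  with \<open>m\<close> pairs has probability \<open>\<Prod>k<m. 1 / (I + S - 1 - 2k)\<close>. Finally, a complete
  wiring with \<open>m\<close> pairs, \<open>j\<close> of them bb, pairs \<open>m + j\<close> infected and \<open>m - j\<close> clean
  devices; either all infected devices are paired, or one is not and then all clean ones are.
  This determines \<open>m\<close> from \<open>j\<close>, and the second alternative is the dagger case.\<close>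

definition partial_wiring :: "nat \<Rightarrow> nat \<Rightarrow> nat \<Rightarrow> nat set set \<Rightarrow> bool" where
  "partial_wiring I S t W \<longleftrightarrow>
     (\<forall>p\<in>W. \<exists>a b. p = {a, b} \<and> a < b \<and> a < t \<and> b < I + S) \<and>
     (\<forall>p\<in>W. \<forall>q\<in>W. p \<noteq> q \<longrightarrow> p \<inter> q = {}) \<and>
     (\<forall>a<t. a \<notin> \<Union>W \<longrightarrow> {..<I + S} - {a} \<subseteq> \<Union>W)"

lemma partial_wiringI:
  assumes "\<And>p. p \<in> W \<Longrightarrow> \<exists>a b. p = {a, b} \<and> a < b \<and> a < t \<and> b < I + S"
    and "\<And>p q. p \<in> W \<Longrightarrow> q \<in> W \<Longrightarrow> p \<noteq> q \<Longrightarrow> p \<inter> q = {}"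
    and "\<And>a. a < t \<Longrightarrow> a \<notin> \<Union>W \<Longrightarrow> {..<I + S} - {a} \<subseteq> \<Union>W"
  shows "partial_wiring I S t W"
  unfolding partial_wiring_def using assms by (intro conjI ballI allI impI)

lemma partial_wiring_pairE:
  assumes "partial_wiring I S t W" and "p \<in> W"
  obtains a b where "p = {a, b}" "a < b" "a < t" "b < I + S"
proof -
  have "\<exists>a b. p = {a, b} \<and> a < b \<and> a < t \<and> b < I + S"
    using assms unfolding partial_wiring_def by blast
  then show thesis by (elim exE conjE) (rule that)
qed

lemma partial_wiring_disjoint:
  "partial_wiring I S t W \<Longrightarrow> p \<in> W \<Longrightarrow> q \<in> W \<Longrightarrow> p \<noteq> q \<Longrightarrow> p \<inter> q = {}"
  unfolding partial_wiring_def by blast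

lemma partial_wiring_unpaired:
  "partial_wiring I S t W \<Longrightarrow> a < t \<Longrightarrow> a \<notin> \<Union>W \<Longrightarrow> {..<I + S} - {a} \<subseteq> \<Union>W"
  unfolding partial_wiring_def by blast

lemma partial_wiring_Union_subset:
  assumes "partial_wiring I S t W" shows "\<Union>W \<subseteq> {..<I + S}"
proof
  fix x assume "x \<in> \<Union>W"
  then obtain p where "p \<in> W" "x \<in> p" by blast
  moreover obtain a b where "p = {a, b}" "a < b" "a < t" "b < I + S"
    using partial_wiring_pairE[OF assms \<open>p \<in> W\<close>] .
  ultimately show "x \<in> {..<I + S}" by auto
qed

lemma finite_partial_wiring:
  assumes "partial_wiring I S t W" shows "finite W"
proof (rule finite_subset)
  show "W \<subseteq> Pow {..<I + S}" using partial_wiring_Union_subset[OF assms] by blast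
qed simp

lemma card_Union_partial_wiring:
  assumes "partial_wiring I S t W" shows "card (\<Union>W) = 2 * card W"
proof -
  have two: "card p = 2" if p: "p \<in> W" for p
  proof -
    obtain a b where "p = {a, b}" "a < b" "a < t" "b < I + S"
      using partial_wiring_pairE[OF assms p] .
    then show ?thesis by simp
  qed
  have "card (\<Union>W) = sum card W"
  proof (rule card_Union_disjoint)
    show "pairwise disjnt W"
      using partial_wiring_disjoint[OF assms] by (auto simp: pairwise_def disjnt_def)
    show "finite p" if "p \<in> W" for p
      using two[OF that] by (simp add: card_ge_0_finite)
  qed
  also have "\<dots> = sum (\<lambda>_. 2) W"
    using two by (intro sum.cong) auto
  finally show ?thesis by simp
qed

lemma partial_wiring_Min_less:
  assumes "partial_wiring I S t W" and "p \<in> W" shows "Min p < t"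
proof -
  obtain a b where "p = {a, b}" "a < b" "a < t" "b < I + S"
    using partial_wiring_pairE[OF assms] .
  then show ?thesis by simp
qed

lemma set_pmf_step_cases:
  assumes "W \<in> set_pmf (step I S t W')"
  obtains (idle) "t \<in> \<Union>W' \<or> unpaired I S W' t = {}" "W = W'" "pmf (step I S t W') W = 1"
  | (pair) u where "t \<notin> \<Union>W'" "u \<in> unpaired I S W' t" "W = insert {t, u} W'"
      "pmf (step I S t W') W = 1 / card (unpaired I S W' t)"
proof (cases "t \<notin> \<Union>W' \<and> unpaired I S W' t \<noteq> {}")
  case False
  then have "step I S t W' = return_pmf W'" unfolding step_def by (simp only: if_False)
  with assms False show ?thesis by (intro idle) auto
next
  case True
  define U where "U = unpaired I S W' t"
  have U: "finite U" "U \<noteq> {}" using True by (auto simp: U_def unpaired_def)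
  have step: "step I S t W' = map_pmf (\<lambda>u. insert {t, u} W') (pmf_of_set U)"
    using True by (simp add: step_def U_def)
  with assms U obtain u where u: "u \<in> U" and W: "W = insert {t, u} W'" by auto
  have "inj_on (\<lambda>u. insert {t, u} W') (set_pmf (pmf_of_set U))"
  proof (rule inj_onI)
    fix x y assume "insert {t, x} W' = insert {t, y} W'"
    moreover have "{t, x} \<notin> W'" using True by blast
    ultimately have "{t, x} = {t, y}" by (metis insertE insertI1)
    then show "x = y" by (metis doubleton_eq_iff)
  qed
  then have "pmf (step I S t W') W = pmf (pmf_of_set U) u"
    unfolding step W by (rule pmf_map_inj) (simp add: u U)
  also have "\<dots> = 1 / card U" using u U by simp
  finally show ?thesis using True u W unfolding U_def by (intro pair) simp_all
qed

lemma card_unpaired: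
  assumes pw: "partial_wiring I S t W" and "t < I + S" and "t \<notin> \<Union>W"
  shows "card (unpaired I S W t) + 2 * card W + 1 = I + S"
proof -
  have fin: "finite (\<Union>W)" "finite (unpaired I S W t)"
    using finite_subset[OF partial_wiring_Union_subset[OF pw]] by (simp_all add: unpaired_def)
  have cover: "{..<I + S} = insert t (unpaired I S W t \<union> \<Union>W)"
    using partial_wiring_Union_subset[OF pw] assms(2) by (auto simp: unpaired_def)
  have disj: "unpaired I S W t \<inter> \<Union>W = {}" "t \<notin> unpaired I S W t \<union> \<Union>W"
    using assms(3) by (auto simp: unpaired_def)
  have "I + S = card {..<I + S}" by simp
  also have "\<dots> = card (insert t (unpaired I S W t \<union> \<Union>W))"
    using cover by (rule arg_cong)
  also have "\<dots> = Suc (card (unpaired I S W t \<union> \<Union>W))"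
    using card_insert_disjoint[OF finite_UnI[OF fin(2,1)] disj(2)] .
  also have "\<dots> = Suc (card (unpaired I S W t) + card (\<Union>W))"
    using card_Un_disjoint[OF fin(2,1) disj(1)] by (rule arg_cong)
  finally have "I + S = Suc (card (unpaired I S W t) + card (\<Union>W))" .
  then show ?thesis using card_Union_partial_wiring[OF pw] by linarith
qed

lemma unpaired_partner_greater:
  assumes pw: "partial_wiring I S t W" and "t < I + S" and "t \<notin> \<Union>W"
    and u: "u \<in> unpaired I S W t"
  shows "t < u"
proof (rule ccontr)
  assume "\<not> t < u"
  with u have "u < t" "u \<notin> \<Union>W" by (auto simp: unpaired_def)
  then have "{..<I + S} - {u} \<subseteq> \<Union>W" by (rule partial_wiring_unpaired[OF pw])
  with \<open>t < I + S\<close> \<open>u < t\<close> have "t \<in> \<Union>W" by auto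
  with \<open>t \<notin> \<Union>W\<close> show False by contradiction
qed

lemma partial_wiring_step:
  assumes "t < I" and pw: "partial_wiring I S t W'" and W: "W \<in> set_pmf (step I S t W')"
  shows "partial_wiring I S (Suc t) W"
  using W
proof (cases rule: set_pmf_step_cases)
  case idle
  show ?thesis unfolding idle(2)
  proof (rule partial_wiringI)
    fix p assume "p \<in> W'"
    then obtain a b where "p = {a, b}" "a < b" "a < t" "b < I + S"
      by (rule partial_wiring_pairE[OF pw])
    then show "\<exists>a b. p = {a, b} \<and> a < b \<and> a < Suc t \<and> b < I + S"
      by (intro exI[of _ a] exI[of _ b]) simp
  next
    fix a assume a: "a < Suc t" "a \<notin> \<Union>W'"
    show "{..<I + S} - {a} \<subseteq> \<Union>W'"
    proof (cases "a = t")
      case True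
      with a idle(1) show ?thesis by (auto simp: unpaired_def)
    next
      case False
      with a show ?thesis by (intro partial_wiring_unpaired[OF pw]) auto
    qed
  qed (rule partial_wiring_disjoint[OF pw])
next
  case (pair u)
  have "t < u" using unpaired_partner_greater[OF pw _ pair(1,2)] \<open>t < I\<close> by simp
  have u: "u < I + S" "u \<notin> \<Union>W'" using pair(2) by (auto simp: unpaired_def)
  show ?thesis unfolding pair(3)
  proof (rule partial_wiringI)
    fix p assume "p \<in> insert {t, u} W'"
    then consider "p = {t, u}" | "p \<in> W'" by blast
    then show "\<exists>a b. p = {a, b} \<and> a < b \<and> a < Suc t \<and> b < I + S"
    proof cases
      case 1
      then show ?thesis using \<open>t < u\<close> u(1) by blast
    next
      case 2
      then obtain a b where "p = {a, b}" "a < b" "a < t" "b < I + S"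
        by (rule partial_wiring_pairE[OF pw])
      then show ?thesis by (intro exI[of _ a] exI[of _ b]) simp
    qed
  next
    fix p q assume "p \<in> insert {t, u} W'" "q \<in> insert {t, u} W'" "p \<noteq> q"
    then show "p \<inter> q = {}"
      using partial_wiring_disjoint[OF pw, of p q] pair(1) u(2) by auto
  next
    fix a assume a: "a < Suc t" "a \<notin> \<Union>(insert {t, u} W')"
    then have "a < t" "a \<notin> \<Union>W'" by auto
    then show "{..<I + S} - {a} \<subseteq> \<Union>(insert {t, u} W')"
      using partial_wiring_unpaired[OF pw] by blast
  qed
qed

definition undo_step :: "nat \<Rightarrow> nat set set \<Rightarrow> nat set set" where
  "undo_step t W = {p \<in> W. Min p \<noteq> t}"

lemma undo_step_step:
  assumes "t < I" and pw: "partial_wiring I S t W'" and W: "W \<in> set_pmf (step I S t W')"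
  shows "undo_step t W = W'"
  using W
proof (cases rule: set_pmf_step_cases)
  case idle
  then show ?thesis
    using partial_wiring_Min_less[OF pw] by (auto simp: undo_step_def)
next
  case (pair u)
  have "t < u" using unpaired_partner_greater[OF pw _ pair(1,2)] \<open>t < I\<close> by simp
  moreover have "{t, u} \<notin> W'" using pair(1) by blast
  ultimately show ?thesis
    using partial_wiring_Min_less[OF pw] unfolding pair(3) undo_step_def by auto
qed

definition wiring_prob :: "nat \<Rightarrow> nat \<Rightarrow> nat \<Rightarrow> real" where
  "wiring_prob I S m = (\<Prod>k<m. 1 / (real (I + S) - 1 - 2 * real k))"

lemma wiring_prob_Suc:
  "wiring_prob I S (Suc m) = wiring_prob I S m / (real (I + S) - 1 - 2 * real m)"
  by (simp add: wiring_prob_def)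

lemma wiring_prob_step:
  assumes "t < I" and pw: "partial_wiring I S t W'" and W: "W \<in> set_pmf (step I S t W')"
  shows "wiring_prob I S (card W) = wiring_prob I S (card W') * pmf (step I S t W') W"
  using W
proof (cases rule: set_pmf_step_cases)
  case idle
  then show ?thesis by simp
next
  case (pair u)
  have "{t, u} \<notin> W'" using pair(1) by blast
  then have "card W = Suc (card W')"
    unfolding pair(3) using finite_partial_wiring[OF pw] by simp
  moreover have "real (card (unpaired I S W' t)) = real (I + S) - 1 - 2 * real (card W')"
    using card_unpaired[OF pw _ pair(1)] \<open>t < I\<close> by simp
  ultimately show ?thesis using pair(4) by (simp add: wiring_prob_Suc)
qed

definition partial_wiring_pmf :: "nat \<Rightarrow> nat \<Rightarrow> nat \<Rightarrow> nat set set pmf" where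
  "partial_wiring_pmf I S n = foldl (\<lambda>p t. bind_pmf p (step I S t)) (return_pmf {}) [0..<n]"

lemma partial_wiring_pmf_Suc:
  "partial_wiring_pmf I S (Suc n) = bind_pmf (partial_wiring_pmf I S n) (step I S n)"
  by (simp add: partial_wiring_pmf_def)

lemma partial_wiring_pmf_support:
  assumes "n \<le> I" and "W \<in> set_pmf (partial_wiring_pmf I S n)"
  shows "partial_wiring I S n W \<and> pmf (partial_wiring_pmf I S n) W = wiring_prob I S (card W)"
  using assms
proof (induction n arbitrary: W)
  case 0
  then show ?case by (simp add: partial_wiring_pmf_def partial_wiring_def wiring_prob_def)
next
  case (Suc n)
  let ?M = "partial_wiring_pmf I S n"
  have "n < I" using Suc.prems(1) by simp
  obtain W' where W': "W' \<in> set_pmf ?M" and W: "W \<in> set_pmf (step I S n W')"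
    using Suc.prems(2) unfolding partial_wiring_pmf_Suc by auto
  have IH: "partial_wiring I S n V \<and> pmf ?M V = wiring_prob I S (card V)"
    if "V \<in> set_pmf ?M" for V
    using Suc.IH[OF _ that] \<open>n < I\<close> by simp
  have "pmf (partial_wiring_pmf I S (Suc n)) W = (\<integral>V. pmf (step I S n V) W \<partial>measure_pmf ?M)"
    unfolding partial_wiring_pmf_Suc by (rule pmf_bind)
  also have "\<dots> = (\<Sum>V\<in>{undo_step n W}. pmf (step I S n V) W * pmf ?M V)"
  proof (rule integral_measure_pmf_real)
    fix V assume V: "V \<in> set_pmf ?M" and "pmf (step I S n V) W \<noteq> 0"
    then have "W \<in> set_pmf (step I S n V)" by (simp add: set_pmf_iff)
    with V have "undo_step n W = V"
      using undo_step_step[OF \<open>n < I\<close>] IH by blast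
    then show "V \<in> {undo_step n W}" by simp
  qed simp
  also have "\<dots> = pmf (step I S n W') W * wiring_prob I S (card W')"
    using undo_step_step[OF \<open>n < I\<close> _ W] IH[OF W'] by simp
  also have "\<dots> = wiring_prob I S (card W)"
    using wiring_prob_step[OF \<open>n < I\<close> _ W] IH[OF W'] by simp
  finally show ?case using partial_wiring_step[OF \<open>n < I\<close> _ W] IH[OF W'] by simp
qed

lemma possible_wiringD:
  assumes "possible_wiring I S W"
  shows "partial_wiring I S I W" and "pmf (wiring_pmf I S) W = wiring_prob I S (card W)"
proof -
  have "wiring_pmf I S = partial_wiring_pmf I S I"
    by (simp add: wiring_pmf_def partial_wiring_pmf_def)
  moreover have "W \<in> set_pmf (wiring_pmf I S)"
    using assms by (simp add: possible_wiring_def set_pmf_iff)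
  ultimately show "partial_wiring I S I W" "pmf (wiring_pmf I S) W = wiring_prob I S (card W)"
    using partial_wiring_pmf_support[where n = I] by simp_all
qed

lemma card_infected_paired:
  assumes pw: "partial_wiring I S t W" and "t \<le> I"
  shows "card (\<Union>W \<inter> {..<I}) = card W + bb_count I W"
proof -
  have fin: "finite W" by (rule finite_partial_wiring[OF pw])
  have infected: "card (p \<inter> {..<I}) = 1 + of_bool (p \<subseteq> {0..<I})" if p: "p \<in> W" for p
  proof -
    obtain a b where ab: "p = {a, b}" "a < b" "a < t" "b < I + S"
      using partial_wiring_pairE[OF pw p] .
    show ?thesis
    proof (cases "b < I")
      case True
      with ab have "p \<inter> {..<I} = {a, b}" "p \<subseteq> {0..<I}" by auto
      with ab show ?thesis by simp
    next
      case False
      with ab \<open>t \<le> I\<close> have "p \<inter> {..<I} = {a}" "\<not> p \<subseteq> {0..<I}" by auto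
      then show ?thesis by simp
    qed
  qed
  have "card (\<Union>W \<inter> {..<I}) = card (\<Union>p\<in>W. p \<inter> {..<I})" by (simp only: Int_Union2)
  also have "\<dots> = (\<Sum>p\<in>W. card (p \<inter> {..<I}))"
    using fin partial_wiring_disjoint[OF pw] by (intro card_UN_disjoint) auto
  also have "\<dots> = (\<Sum>p\<in>W. 1 + of_bool (p \<subseteq> {0..<I}))"
    using infected by (rule sum.cong[OF refl])
  also have "\<dots> = card W + card (W \<inter> {p. p \<subseteq> {0..<I}})"
    unfolding sum.distrib using fin by simp
  also have "\<dots> = card W + bb_count I W"
    by (simp add: bb_count_def Collect_conj_eq)
  finally show ?thesis .
qed

lemma card_clean_paired:
  assumes pw: "partial_wiring I S t W" and "t \<le> I"
  shows "card (\<Union>W \<inter> {I..<I + S}) + bb_count I W = card W"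
proof -
  have "\<Union>W = (\<Union>W \<inter> {..<I}) \<union> (\<Union>W \<inter> {I..<I + S})"
    using partial_wiring_Union_subset[OF pw] by auto
  moreover have "finite (\<Union>W \<inter> {..<I})" "finite (\<Union>W \<inter> {I..<I + S})"
    and "(\<Union>W \<inter> {..<I}) \<inter> (\<Union>W \<inter> {I..<I + S}) = {}" by auto
  ultimately have "card (\<Union>W) = card (\<Union>W \<inter> {..<I}) + card (\<Union>W \<inter> {I..<I + S})"
    by (metis card_Un_disjoint)
  then show ?thesis
    using card_Union_partial_wiring[OF pw] card_infected_paired[OF pw \<open>t \<le> I\<close>] by simp
qed

text \<open>Pair and bb counts of a complete wiring: either every infected device is paired, or
  exactly one is not and then every clean device is.\<close>
definition final_counts :: "nat \<Rightarrow> nat \<Rightarrow> nat \<Rightarrow> nat \<Rightarrow> bool" where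
  "final_counts I S m j \<longleftrightarrow>
     (j \<le> m \<and> m + j = I \<and> m \<le> j + S) \<or> (m + j + 1 = I \<and> m = j + S)"

lemma final_counts_partial_wiring:
  assumes pw: "partial_wiring I S I W"
  shows "final_counts I S (card W) (bb_count I W)"
proof (cases "{..<I} \<subseteq> \<Union>W")
  case True
  then have "card (\<Union>W \<inter> {..<I}) = I" by (simp add: Int_absorb1)
  moreover have "card (\<Union>W \<inter> {I..<I + S}) \<le> S"
    using card_mono[of "{I..<I + S}" "\<Union>W \<inter> {I..<I + S}"] by simp
  ultimately show ?thesis
    using card_infected_paired[OF pw] card_clean_paired[OF pw] unfolding final_counts_def by fastforce
next
  case False
  then obtain a where a: "a < I" "a \<notin> \<Union>W" by auto
  then have covered: "{..<I + S} - {a} \<subseteq> \<Union>W" by (rule partial_wiring_unpaired[OF pw])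
  have "\<Union>W \<inter> {..<I} = {..<I} - {a}" using covered a by auto
  then have "card (\<Union>W \<inter> {..<I}) + 1 = I" using a by simp
  moreover have "\<Union>W \<inter> {I..<I + S} = {I..<I + S}" using covered a by auto
  ultimately show ?thesis
    using card_infected_paired[OF pw] card_clean_paired[OF pw] unfolding final_counts_def by fastforce
qed

lemma L_le_half_excess: "L I S \<le> (I - S) div 2"
  unfolding L_def by (auto intro: div_le_mono)

lemma final_counts_bb_bounds:
  assumes "final_counts I S m j"
  shows "L I S \<le> j \<and> j \<le> I div 2"
  using assms unfolding final_counts_def
proof
  assume "j \<le> m \<and> m + j = I \<and> m \<le> j + S"
  then have "I - S \<le> 2 * j" "2 * j \<le> I" by linarith+
  then show ?thesis using L_le_half_excess[of I S] by linarith
next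
  assume "m + j + 1 = I \<and> m = j + S"
  then have "I - S = 2 * j + 1" "S < I" by linarith+
  then show ?thesis by (simp add: L_def)
qed

lemma final_counts_dagger:
  assumes "final_counts I S m j"
  shows "int I - int j - 1 - (if dagger I S j then 1 else 0) = int m - 1"
  using assms unfolding final_counts_def dagger_def by auto

lemma wiring_prob_eq_prod_int:
  "wiring_prob I S m = (\<Prod>k\<in>{0..int m - 1}. 1 / (real I + real S - 1 - 2 * real_of_int k))"
proof -
  have "{0..int m - 1} = int ` {..<m}"
    by (auto simp: image_iff intro!: bexI[where x = "nat _"])
  then show ?thesis unfolding wiring_prob_def by (simp add: prod.reindex)
qed

theorem lemma2:
  fixes I S j :: nat
  shows "((j > I div 2 \<or> j < L I S) \<longrightarrow>
           (\<forall>W. possible_wiring I S W \<longrightarrow> bb_count I W \<noteq> j)) \<and>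
         (L I S \<le> j \<and> j \<le> I div 2 \<longrightarrow>
           (\<forall>W. possible_wiring I S W \<and> bb_count I W = j \<longrightarrow>
              pmf (wiring_pmf I S) W =
                (\<Prod>k\<in>{0..int I - int j - 1 - (if dagger I S j then 1 else 0)}.
                   1 / (real I + real S - 1 - 2 * real_of_int k))))"
proof (intro conjI impI allI)
  fix W assume j: "I div 2 < j \<or> j < L I S" and W: "possible_wiring I S W"
  have "final_counts I S (card W) (bb_count I W)"
    by (rule final_counts_partial_wiring[OF possible_wiringD(1)[OF W]])
  then show "bb_count I W \<noteq> j" using final_counts_bb_bounds j by fastforce
next
  fix W assume "possible_wiring I S W \<and> bb_count I W = j"
  then have W: "possible_wiring I S W" and "bb_count I W = j" by simp_all
  then have counts: "final_counts I S (card W) j"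
    using final_counts_partial_wiring[OF possible_wiringD(1)[OF W]] by simp
  show "pmf (wiring_pmf I S) W =
      (\<Prod>k\<in>{0..int I - int j - 1 - (if dagger I S j then 1 else 0)}.
         1 / (real I + real S - 1 - 2 * real_of_int k))"
    unfolding final_counts_dagger[OF counts] possible_wiringD(2)[OF W] by (rule wiring_prob_eq_prod_int)
qed

end
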